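(* Let $n\ge1$, $\mu_c>0$, $\lambda_1,\dots,\lambda_n>0$, $\mathbf{D}=\mathrm{diag}(\lambda_1,\dots,\lambda_n)$, $\mathbf{C}$ an $n\times n$ symmetric positive definite matrix with unit diagonal, and $\hat\lambda_1,\dots,\hat\lambda_n$ the eigenvalues of $\mathbf{D}\mathbf{C}$. Let $G_1,\dots,G_n$ be i.i.d. Gamma$(\mu_c,1)$ random variables, and let $S\ge0$ be a random variable independent of $(G_1,\dots,G_n)$. Put $I=\sum_{i=1}^n\lambda_iG_i$ and $\hat I=\sum_{i=1}^n\hat\lambda_iG_i$. Then $I\le_{cx}\hat I$, and (whenever the expectations exist) $$\hat R:=\mathbb{E}\left[\ln\left(1+\frac{S}{\hat I}\right)\right]\ \ge\ R:=\mathbb{E}\left[\ln\left(1+\frac{S}{I}\right)\right].$$ In particular, when both the user channel and the interferers experience $\eta$-$\mu$ fading (with $n=2N$, $\lambda_{2i-1}=\frac{d_i^{-\alpha}}{\mu_c(1+\eta_i^{-1})}$, $\lambda_{2i}=\frac{d_i^{-\alpha}}{\mu_c(1+\eta_i)}$), the rate with positively correlated interferers is at least the rate with independent interferers.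
   Context: $X\le_{cx}Y$ (convex order) means $\mathbb{E}[\phi(X)]\le\mathbb{E}[\phi(Y)]$ for every convex $\phi:\mathbb{R}\to\mathbb{R}$ for which the expectations exist. Gamma$(a,\theta)$ denotes the gamma law with shape $a$ and scale $\theta$. In the application $S$ is the user's received signal power ($\eta$-$\mu$ power times $r^{-\alpha}$), $I$ the total interference power from $N$ independent $\eta$-$\mu$ interferers with common $\mu=\mu_c$ at distances $d_i$ with parameters $\eta_i$ (each $\eta$-$\mu$ power being a sum of two independent gamma variables), and $\hat I$ the total interference in the correlated case, with $\mathbf{C}$ the correlation matrix with entries $\sqrt{\rho_{ij}}$, $\rho_{ij}\in[0,1]$. *)

theory Defs
  imports "HOL-Probability.Probability"
begin

definition gamma_density :: "real \<Rightarrow> real \<Rightarrow> real" where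
  "gamma_density a x = (if 0 < x then x powr (a - 1) * exp (- x) / Gamma a else 0)"

definition cx_le :: "'a measure \<Rightarrow> ('a \<Rightarrow> real) \<Rightarrow> ('a \<Rightarrow> real) \<Rightarrow> bool" where
  "cx_le M X Y \<longleftrightarrow>
     (\<forall>\<phi> :: real \<Rightarrow> real. convex_on UNIV \<phi> \<longrightarrow>
        integrable M (\<lambda>\<omega>. \<phi> (X \<omega>)) \<longrightarrow> integrable M (\<lambda>\<omega>. \<phi> (Y \<omega>)) \<longrightarrow>
        (\<integral>\<omega>. \<phi> (X \<omega>) \<partial>M) \<le> (\<integral>\<omega>. \<phi> (Y \<omega>) \<partial>M))"

definition sym_pos_def :: "real^'n^'n \<Rightarrow> bool" where
  "sym_pos_def C \<longleftrightarrow> transpose C = C \<and> (\<forall>x. x \<noteq> 0 \<longrightarrow> x \<bullet> (C *v x) > 0)"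

definition diag_mat :: "('n \<Rightarrow> real) \<Rightarrow> real^'n^'n" where
  "diag_mat l = (\<chi> i j. if i = j then l i else 0)"

text \<open>lam lists the eigenvalues of A counted with algebraic multiplicity, i.e.
  the characteristic polynomial of A is the product of (x - lam i).\<close>
definition eigenvalues_of :: "real^'n^'n \<Rightarrow> ('n::finite \<Rightarrow> real) \<Rightarrow> bool" where
  "eigenvalues_of A lam \<longleftrightarrow> (\<forall>x::real. det (x *\<^sub>R mat 1 - A) = (\<Prod>i\<in>UNIV. x - lam i))"

end

theory Submission
  imports Defs "HOL-Computational_Algebra.Polynomial"
begin

text \<open>
  With \<open>d = sqrt \<circ> lam\<close>, the matrix \<open>diag lam ** C\<close> is similar to the symmetric positive definite
  matrix \<open>A = diag d ** C ** diag d\<close>, whose eigenvalues are therefore \<open>lamh\<close> (all positive) and whose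
  diagonal is \<open>lam\<close>, because \<open>C\<close> has unit diagonal. Diagonalising \<open>A = Q diag \<mu> Q\<^sup>T\<close> gives
  \<open>lam = P \<mu>\<close> for the doubly stochastic matrix \<open>P i j = (Q i j)\<^sup>2\<close>, so by Schur's theorem
  \<open>lam\<close> is a convex combination of permutations of \<open>lamh\<close>.

  Since the \<open>G i\<close> are i.i.d. and independent of \<open>S\<close>, permuting the weights \<open>lamh\<close> does not
  change the joint law of \<open>S\<close> and \<open>\<Sum>i. lamh i * G i\<close>. Hence Jensen's inequality gives
  \<open>E f(S, \<Sum>i. lam i * G i) \<le> E f(S, \<Sum>i. lamh i * G i)\<close> for every \<open>f\<close> convex in its second
  argument on a set containing the permuted sums. Convex order is the case \<open>f(s, y) = \<phi> y\<close>; the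
  rate inequality is the case \<open>f(s, y) = ln (1 + s / y)\<close>, convex for \<open>y > 0\<close>.
\<close>

lemma diag_mat_matrix_mult_nth: "(diag_mat a ** M) $ i $ j = a i * M $ i $ j"
  by (simp add: matrix_matrix_mult_def diag_mat_def if_distrib[of "\<lambda>x. x * _"] cong: if_cong)

lemma matrix_mult_diag_mat_nth: "(M ** diag_mat a) $ i $ j = M $ i $ j * a j"
  by (simp add: matrix_matrix_mult_def diag_mat_def if_distrib[of "\<lambda>x. _ * x"] cong: if_cong)

lemma det_diag_mat: "det (diag_mat (a :: 'n::finite \<Rightarrow> real)) = (\<Prod>i\<in>UNIV. a i)"
  by (subst det_diagonal) (auto simp: diag_mat_def)

lemma charpoly_similar:
  fixes M P P' :: "real^'n^'n"
  assumes "P ** P' = mat 1"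
  shows "det (x *\<^sub>R mat 1 - P ** M ** P') = det (x *\<^sub>R mat 1 - M)"
proof -
  have "P ** (x *\<^sub>R mat 1 - M) ** P' = P ** (x *\<^sub>R mat 1) ** P' - P ** M ** P'"
    by (simp add: matrix_matrix_mult_def vec_eq_iff sum_subtractf algebra_simps)
  also have "P ** (x *\<^sub>R mat 1) ** P' = x *\<^sub>R mat 1"
    using assms by (simp add: matrix_scalar_ac scalar_matrix_assoc[symmetric])
  finally have "x *\<^sub>R mat 1 - P ** M ** P' = P ** (x *\<^sub>R mat 1 - M) ** P'" ..
  moreover have "det P * det P' = 1" using assms by (metis det_I det_mul)
  ultimately show ?thesis by (simp add: det_mul)
qed

lemma diag_mat_mult: "diag_mat a ** diag_mat b = diag_mat (\<lambda>i. a i * b i)"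
  by (simp add: vec_eq_iff matrix_mult_diag_mat_nth) (simp add: diag_mat_def)

lemma scaleR_mat_1_minus_diag_mat: "x *\<^sub>R mat 1 - diag_mat a = diag_mat (\<lambda>i. x - a i)"
  by (simp add: vec_eq_iff diag_mat_def mat_def)

lemma inner_matrix_vector_symmetric:
  fixes A :: "real^'n^'n"
  assumes "transpose A = A"
  shows "x \<bullet> (A *v y) = (A *v x) \<bullet> y"
  by (metis assms dot_lmul_matrix vector_transpose_matrix)

section \<open>Spectral theorem for real symmetric matrices\<close>

lemma linear_coeff_zero_if_quadratic_nonpos:
  fixes a q :: real
  assumes "\<And>t. 2 * t * a + t\<^sup>2 * q \<le> 0"
  shows "a = 0"
proof -
  define s where "s = \<bar>q\<bar> + 1"
  have s: "s > 0" "2 * s + q > 0" by (auto simp: s_def abs_if)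
  have "(2 * (a / s) * a + (a / s)\<^sup>2 * q) * s\<^sup>2 \<le> 0"
    using assms[of "a / s"] by (simp add: mult_nonpos_nonneg)
  also have "(2 * (a / s) * a + (a / s)\<^sup>2 * q) * s\<^sup>2 = a\<^sup>2 * (2 * s + q)"
    using s by (simp add: field_simps power2_eq_square)
  finally show ?thesis using s(2) by (simp add: mult_le_0_iff)
qed

text \<open>A maximiser of the Rayleigh quotient on an \<open>A\<close>-invariant subspace is an eigenvector:
  perturbing it along \<open>w = A u - m u\<close> shows that \<open>\<parallel>w\<parallel>\<^sup>2\<close> is the linear coefficient of a
  nonpositive quadratic in the step size.\<close>
lemma symmetric_rayleigh_maximiser_eigenvector:
  fixes A :: "real^'n^'n"
  assumes sym: "transpose A = A" and V: "subspace V" and inv: "\<And>x. x \<in> V \<Longrightarrow> A *v x \<in> V"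
    and u: "u \<in> V" "norm u = 1"
    and max: "\<And>y. y \<in> V \<Longrightarrow> norm y = 1 \<Longrightarrow> y \<bullet> (A *v y) \<le> u \<bullet> (A *v u)"
  shows "A *v u = (u \<bullet> (A *v u)) *\<^sub>R u"
proof -
  define m where "m = u \<bullet> (A *v u)"
  have uu: "u \<bullet> u = 1" using u(2) by (simp add: norm_eq_1)
  have hom: "z \<bullet> (A *v z) \<le> m * (z \<bullet> z)" if "z \<in> V" for z
  proof (cases "z = 0")
    case False
    have "(z /\<^sub>R norm z) \<bullet> (A *v (z /\<^sub>R norm z)) \<le> m"
      using max[of "z /\<^sub>R norm z"] that False V by (simp add: m_def subspace_scale)
    then show ?thesis
      using False by (simp add: matrix_vector_mult_scaleR power2_norm_eq_inner[symmetric]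
          field_simps power2_eq_square)
  qed simp
  define w where "w = A *v u - m *\<^sub>R u"
  have wV: "w \<in> V" unfolding w_def using V u inv by (simp add: subspace_diff subspace_scale)
  have wu: "u \<bullet> w = 0" by (simp add: w_def m_def inner_diff_right uu)
  have Auw: "u \<bullet> (A *v w) = w \<bullet> w"
    using inner_matrix_vector_symmetric[OF sym, of u w] wu
    by (simp add: inner_commute w_def inner_diff_left)
  have "2 * t * (w \<bullet> w) + t\<^sup>2 * (w \<bullet> (A *v w) - m * (w \<bullet> w)) \<le> 0" for t
  proof -
    have "(u + t *\<^sub>R w) \<bullet> (A *v (u + t *\<^sub>R w)) \<le> m * ((u + t *\<^sub>R w) \<bullet> (u + t *\<^sub>R w))"
      using hom V u wV by (simp add: subspace_add subspace_scale)
    moreover have "u \<bullet> (A *v w) = w \<bullet> (A *v u)"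
      using inner_matrix_vector_symmetric[OF sym, of u w] by (simp add: inner_commute)
    ultimately show ?thesis
      using Auw wu uu
      by (simp add: m_def inner_commute[of w u] power2_eq_square algebra_simps)
  qed
  then have "w \<bullet> w = 0" by (rule linear_coeff_zero_if_quadratic_nonpos)
  then show ?thesis by (simp add: w_def m_def)
qed

lemma symmetric_eigenvector_orthogonal_to_eigenvectors:
  fixes A :: "real^'n^'n"
  assumes sym: "transpose A = A" and B: "finite B" "card B < CARD('n)"
    and eig: "\<And>b. b \<in> B \<Longrightarrow> \<exists>\<mu>. A *v b = \<mu> *\<^sub>R b"
  obtains u \<mu> where "norm u = 1" "\<And>b. b \<in> B \<Longrightarrow> orthogonal b u" "A *v u = \<mu> *\<^sub>R u"
proof -
  define V where "V = {y. \<forall>b\<in>B. orthogonal b y}"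
  have V: "subspace V" unfolding V_def by (rule subspace_orthogonal_to_vectors)
  have inv: "A *v x \<in> V" if "x \<in> V" for x
  proof -
    have "orthogonal b (A *v x)" if "b \<in> B" for b
    proof -
      obtain \<mu> where "A *v b = \<mu> *\<^sub>R b" using eig \<open>b \<in> B\<close> by blast
      then show ?thesis using \<open>x \<in> V\<close> \<open>b \<in> B\<close> inner_matrix_vector_symmetric[OF sym, of b x]
        by (simp add: V_def orthogonal_def)
    qed
    then show ?thesis by (simp add: V_def)
  qed
  have "dim B < DIM(real^'n)" using B dim_le_card' by fastforce
  then obtain v where v: "v \<noteq> 0" "\<And>y. y \<in> span B \<Longrightarrow> orthogonal v y"
    by (metis orthogonal_to_subspace_exists)
  define K where "K = sphere 0 1 \<inter> V"
  have "v /\<^sub>R norm v \<in> K"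
    using v by (auto simp: K_def V_def orthogonal_commute span_base orthogonal_clauses)
  then have ne: "K \<noteq> {}" by blast
  have cpt: "compact K"
    unfolding K_def by (intro compact_Int_closed compact_sphere closed_subspace V)
  have cont: "continuous_on K (\<lambda>x. x \<bullet> (A *v x))" by (intro continuous_intros)
  obtain u where "u \<in> K" and max: "\<And>y. y \<in> K \<Longrightarrow> y \<bullet> (A *v y) \<le> u \<bullet> (A *v u)"
    using continuous_attains_sup[OF cpt ne cont] by blast
  then have u: "u \<in> V" "norm u = 1" by (auto simp: K_def)
  have eig_u: "A *v u = (u \<bullet> (A *v u)) *\<^sub>R u"
    using u max by (intro symmetric_rayleigh_maximiser_eigenvector[OF sym V inv]) (auto simp: K_def)
  have "\<And>b. b \<in> B \<Longrightarrow> orthogonal b u" using u(1) by (simp add: V_def)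
  then show ?thesis using that[OF u(2) _ eig_u] by blast
qed

lemma symmetric_orthonormal_eigenvectors:
  fixes A :: "real^'n^'n"
  assumes sym: "transpose A = A" and "k \<le> CARD('n)"
  shows "\<exists>B. finite B \<and> card B = k \<and> pairwise orthogonal B
           \<and> (\<forall>b\<in>B. norm b = 1 \<and> (\<exists>\<mu>. A *v b = \<mu> *\<^sub>R b))"
  using assms(2)
proof (induction k)
  case 0
  show ?case by (intro exI[of _ "{}"]) simp
next
  case (Suc k)
  then obtain B where B: "finite B" "card B = k" "pairwise orthogonal B"
    "\<forall>b\<in>B. norm b = 1 \<and> (\<exists>\<mu>. A *v b = \<mu> *\<^sub>R b)" by auto
  obtain u \<mu> where u: "norm u = 1" "\<And>b. b \<in> B \<Longrightarrow> orthogonal b u" "A *v u = \<mu> *\<^sub>R u"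
    using symmetric_eigenvector_orthogonal_to_eigenvectors[OF sym B(1)] B(2,4) Suc.prems by auto
  have "u \<notin> B"
  proof
    assume "u \<in> B"
    then have "u \<bullet> u = 0" using u(2) by (simp add: orthogonal_def)
    then show False using u(1) by simp
  qed
  then show ?case
    using B u by (intro exI[of _ "insert u B"])
      (auto simp: pairwise_insert orthogonal_commute)
qed

theorem symmetric_matrix_orthogonal_diagonalization:
  fixes A :: "real^'n^'n"
  assumes sym: "transpose A = A"
  obtains Q \<mu> where "orthogonal_matrix Q" "A = Q ** diag_mat \<mu> ** transpose Q"
proof -
  obtain B where B: "finite B" "card B = CARD('n)" "pairwise orthogonal B"
    "\<forall>b\<in>B. norm b = 1 \<and> (\<exists>\<mu>. A *v b = \<mu> *\<^sub>R b)"
    using symmetric_orthonormal_eigenvectors[OF sym order_refl] by blast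
  obtain e where e: "bij_betw e (UNIV :: 'n set) B"
    using finite_same_card_bij[of "UNIV :: 'n set" B] B by auto
  then have eB: "e j \<in> B" and inj: "inj e" for j by (auto simp: bij_betw_def)
  have "\<forall>j. \<exists>\<mu>. A *v e j = \<mu> *\<^sub>R e j" using B(4) eB by blast
  then obtain \<mu> where \<mu>: "\<And>j. A *v e j = \<mu> j *\<^sub>R e j" by metis
  define Q :: "real^'n^'n" where "Q = (\<chi> k j. e j $ k)"
  have col: "column j Q = e j" for j by (simp add: Q_def column_def)
  have orth: "orthogonal (e i) (e j)" if "i \<noteq> j" for i j
    using B(3) eB inj that by (simp add: pairwise_def inj_eq)
  have norm: "norm (e j) = 1" for j using B(4) eB by blast
  have Q: "orthogonal_matrix Q"
    unfolding orthogonal_matrix_orthonormal_columns col using orth norm by simp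
  have "(A ** Q) $ k $ j = (Q ** diag_mat \<mu>) $ k $ j" for k j
  proof -
    have "(A ** Q) $ k $ j = (A *v e j) $ k"
      by (simp add: matrix_matrix_mult_def matrix_vector_mult_def Q_def)
    then show ?thesis by (simp add: \<mu> matrix_mult_diag_mat_nth Q_def mult.commute)
  qed
  then have "A ** Q = Q ** diag_mat \<mu>" by (simp add: vec_eq_iff)
  then have "A = Q ** diag_mat \<mu> ** transpose Q"
    using Q by (metis matrix_mul_assoc matrix_mul_rid orthogonal_matrix_def)
  with Q that show ?thesis by blast
qed

section \<open>Eigenvalues as roots of the characteristic polynomial\<close>

lemma order_prod_linear_factors:
  fixes a :: "'i \<Rightarrow> real"
  assumes "finite A"
  shows "order c (\<Prod>i\<in>A. [:- a i, 1:]) = card {i\<in>A. a i = c}"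
  using assms
proof (induction A rule: finite_induct)
  case empty
  then show ?case by (simp add: order_0I)
next
  case (insert k A)
  let ?P = "\<Prod>i\<in>A. [:- a i, 1:]"
  have "?P \<noteq> 0" using insert.hyps(1) by simp
  then have "[:- a k, 1:] * ?P \<noteq> 0" by (simp only: mult_eq_0_iff) simp
  then have "order c ([:- a k, 1:] * ?P) = order c [:- a k, 1:] + order c ?P" by (rule order_mult)
  then have "order c (\<Prod>i\<in>insert k A. [:- a i, 1:]) = order c [:- a k, 1:] + card {i\<in>A. a i = c}"
    using insert by simp
  also have "order c [:- a k, 1:] = (if a k = c then 1 else 0)"
    using order_power_n_n[of c 1] by (auto intro: order_0I)
  also have "(if a k = c then 1 else 0) + card {i\<in>A. a i = c} = card {i\<in>insert k A. a i = c}"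
  proof -
    have "{i\<in>insert k A. a i = c} = (if a k = c then insert k {i\<in>A. a i = c} else {i\<in>A. a i = c})"
      by auto
    then show ?thesis using insert.hyps by simp
  qed
  finally show ?case .
qed

lemma permutation_of_equal_fibre_cards:
  fixes a b :: "'i::finite \<Rightarrow> 'v"
  assumes "\<And>c. card {i. a i = c} = card {i. b i = c}"
  obtains \<sigma> where "\<sigma> permutes UNIV" "\<And>i. b (\<sigma> i) = a i"
proof -
  have "\<forall>c. \<exists>h. bij_betw h {i. a i = c} {i. b i = c}"
    using assms by (intro allI finite_same_card_bij) auto
  then obtain h where h: "\<And>c. bij_betw (h c) {i. a i = c} {i. b i = c}" by metis
  define \<sigma> where "\<sigma> i = h (a i) i" for i
  have b\<sigma>: "b (\<sigma> i) = a i" for i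
    using bij_betwE[OF h[of "a i"]] by (auto simp: \<sigma>_def)
  have "inj \<sigma>"
  proof (rule injI)
    fix i j assume "\<sigma> i = \<sigma> j"
    moreover from this have "a i = a j" using b\<sigma> by metis
    ultimately show "i = j"
      using bij_betw_imp_inj_on[OF h[of "a i"]] by (auto simp: \<sigma>_def inj_on_def)
  qed
  then have "bij \<sigma>" by (simp add: bij_def finite_UNIV_inj_surj)
  then have "\<sigma> permutes UNIV" by (rule bij_imp_permutes) simp
  with b\<sigma> that show ?thesis by blast
qed

lemma prod_linear_factors_eq_permutation:
  fixes a b :: "'i::finite \<Rightarrow> real"
  assumes "\<And>x. (\<Prod>i\<in>UNIV. x - a i) = (\<Prod>i\<in>UNIV. x - b i)"
  obtains \<sigma> where "\<sigma> permutes UNIV" "\<And>i. b (\<sigma> i) = a i"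
proof (rule permutation_of_equal_fibre_cards)
  fix c
  have "poly (\<Prod>i\<in>UNIV. [:- a i, 1:]) = poly (\<Prod>i\<in>UNIV. [:- b i, 1:])"
    using assms by (simp add: poly_prod fun_eq_iff)
  then have "(\<Prod>i\<in>UNIV. [:- a i, 1:]) = (\<Prod>i\<in>UNIV. [:- b i, 1:])"
    by (simp add: poly_eq_poly_eq_iff)
  then show "card {i. a i = c} = card {i. b i = c}"
    using order_prod_linear_factors[of UNIV c a] order_prod_linear_factors[of UNIV c b] by simp
qed (rule that)

lemma eigenvalues_of_orthogonal_diagonalization:
  fixes Q :: "real^'n^'n"
  assumes "orthogonal_matrix Q" "eigenvalues_of (Q ** diag_mat \<mu> ** transpose Q) l"
  obtains \<sigma> where "\<sigma> permutes UNIV" "\<And>i. l (\<sigma> i) = \<mu> i"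
proof (rule prod_linear_factors_eq_permutation)
  fix x
  have "det (x *\<^sub>R mat 1 - Q ** diag_mat \<mu> ** transpose Q) = (\<Prod>i\<in>UNIV. x - \<mu> i)"
    using assms(1) by (simp add: charpoly_similar orthogonal_matrix_def
        scaleR_mat_1_minus_diag_mat det_diag_mat)
  then show "(\<Prod>i\<in>UNIV. x - \<mu> i) = (\<Prod>i\<in>UNIV. x - l i)"
    using assms(2) by (simp add: eigenvalues_of_def)
qed (rule that)

lemma eigenvalues_of_diag_mat_mult_symmetrized:
  fixes C :: "real^'n^'n"
  assumes "\<And>i. d i \<noteq> 0"
  shows "eigenvalues_of (diag_mat (\<lambda>i. d i * d i) ** C) l
     \<longleftrightarrow> eigenvalues_of (diag_mat d ** C ** diag_mat d) l"
proof -
  have inv: "diag_mat d ** diag_mat (\<lambda>i. 1 / d i) = mat 1"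
    using assms by (simp add: diag_mat_mult) (simp add: diag_mat_def mat_def)
  have "diag_mat (\<lambda>i. d i * d i) ** C = diag_mat d ** (diag_mat d ** C ** diag_mat d) ** diag_mat (\<lambda>i. 1 / d i)"
    using assms by (simp add: vec_eq_iff diag_mat_matrix_mult_nth matrix_mult_diag_mat_nth)
  then show ?thesis by (simp add: eigenvalues_of_def charpoly_similar[OF inv])
qed

section \<open>Schur's majorisation theorem\<close>

definition doubly_stochastic :: "('i::finite \<Rightarrow> 'i \<Rightarrow> real) \<Rightarrow> bool" where
  "doubly_stochastic P \<longleftrightarrow>
     (\<forall>i j. 0 \<le> P i j) \<and> (\<forall>i. (\<Sum>j\<in>UNIV. P i j) = 1) \<and> (\<forall>j. (\<Sum>i\<in>UNIV. P i j) = 1)"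

definition permuted_vectors :: "('n::finite \<Rightarrow> real) \<Rightarrow> (real^'n) set" where
  "permuted_vectors \<mu> = {(\<chi> i. \<mu> (\<sigma> i)) | \<sigma>. \<sigma> permutes UNIV}"

lemma finite_permuted_vectors: "finite (permuted_vectors \<mu>)"
proof -
  have "permuted_vectors \<mu> = (\<lambda>\<sigma>. \<chi> i. \<mu> (\<sigma> i)) ` {\<sigma>. \<sigma> permutes UNIV}"
    by (auto simp: permuted_vectors_def)
  then show ?thesis by (simp add: finite_permutations)
qed

lemma permuted_vectors_comp_subset:
  assumes "\<sigma> permutes UNIV"
  shows "permuted_vectors (\<mu> \<circ> \<sigma>) \<subseteq> permuted_vectors \<mu>"
proof
  fix x assume "x \<in> permuted_vectors (\<mu> \<circ> \<sigma>)"
  then obtain \<pi> where "\<pi> permutes UNIV" "x = (\<chi> i. \<mu> ((\<sigma> \<circ> \<pi>) i))"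
    by (auto simp: permuted_vectors_def)
  moreover have "\<sigma> \<circ> \<pi> permutes UNIV" using \<open>\<pi> permutes UNIV\<close> assms by (rule permutes_compose)
  ultimately show "x \<in> permuted_vectors \<mu>" unfolding permuted_vectors_def by blast
qed

lemma sum_mult_lower_top_value:
  fixes c d :: "'i \<Rightarrow> real"
  assumes "M2 < M" and I: "finite I" and below: "\<And>i. i \<in> I \<Longrightarrow> c i \<noteq> M \<Longrightarrow> c i \<le> M2"
  shows "(\<Sum>i\<in>I. c i * d i)
       = (\<Sum>i\<in>I. (if c i = M then M2 else c i) * d i) + (M - M2) * sum d {i\<in>I. c i > M2}"
proof -
  have top: "{i\<in>I. c i > M2} = {i\<in>I. c i = M}" using assms(1) below by force
  have "(\<Sum>i\<in>I. c i * d i)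
      = (\<Sum>i\<in>I. (if c i = M then M2 else c i) * d i) + (\<Sum>i\<in>I. if c i = M then (M - M2) * d i else 0)"
    by (subst sum.distrib[symmetric]) (auto intro: sum.cong simp: algebra_simps)
  also have "(\<Sum>i\<in>I. if c i = M then (M - M2) * d i else 0) = (M - M2) * sum d {i\<in>I. c i > M2}"
    using I by (simp add: top sum.inter_filter[symmetric] sum_distrib_left)
  finally show ?thesis .
qed

text \<open>Discrete Abel summation: writing \<open>c\<close> as a sum of steps between its consecutive values,
  \<open>\<Sum>i. c i * d i\<close> becomes a nonnegative combination of the sums of \<open>d\<close> over the sets
  \<open>{i. c i > t}\<close>. The induction lowers the largest value of \<open>c\<close> to the second largest.\<close>
lemma sum_mult_nonneg_if_superlevel_sums_nonneg:
  fixes c d :: "'i \<Rightarrow> real"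
  assumes I: "finite I" and d0: "sum d I = 0" and sup: "\<And>t. sum d {i\<in>I. c i > t} \<ge> 0"
  shows "(\<Sum>i\<in>I. c i * d i) \<ge> 0"
  using sup
proof (induction "card (c ` I)" arbitrary: c rule: less_induct)
  case less
  show ?case
  proof (cases "card (c ` I) \<le> 1")
    case True
    consider "card (c ` I) = 0" | "card (c ` I) = 1" using True by linarith
    then show ?thesis
    proof cases
      case 1
      then show ?thesis using I by simp
    next
      case 2
      then obtain v where v: "c ` I = {v}" by (rule card_1_singletonE)
      then have "(\<Sum>i\<in>I. c i * d i) = (\<Sum>i\<in>I. v * d i)" by (intro sum.cong) auto
      then show ?thesis using d0 by (simp add: sum_distrib_left[symmetric])
    qed
  next
    case False
    define M where "M = Max (c ` I)"
    define M2 where "M2 = Max (c ` I - {M})"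
    have "c ` I \<noteq> {}" using False by auto
    then have M: "M \<in> c ` I" "\<And>i. i \<in> I \<Longrightarrow> c i \<le> M" using I by (auto simp: M_def)
    have "c ` I - {M} \<noteq> {}"
    proof
      assume "c ` I - {M} = {}"
      then have "card (c ` I) \<le> card {M}" by (intro card_mono) auto
      with False show False by simp
    qed
    then have M2: "M2 \<in> c ` I - {M}" using I unfolding M2_def by (intro Max_in) auto
    have M2_ge: "c i \<le> M2" if "i \<in> I" "c i \<noteq> M" for i
      using I that unfolding M2_def by (intro Max_ge) auto
    have M2M: "M2 \<le> M" using M2 M by auto
    define c' where "c' i = (if c i = M then M2 else c i)" for i
    have c'M2: "c' i \<le> M2" if "i \<in> I" for i using M2_ge that by (simp add: c'_def)
    have "c' ` I \<subseteq> c ` I - {M}" using M2 by (auto simp: c'_def)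
    then have "card (c' ` I) \<le> card (c ` I - {M})" using I by (intro card_mono) auto
    also have "\<dots> < card (c ` I)" using I M(1) by (intro card_Diff1_less) auto
    finally have "card (c' ` I) < card (c ` I)" .
    moreover have "sum d {i\<in>I. c' i > t} \<ge> 0" for t
    proof (cases "M2 \<le> t")
      case True
      then have "{i\<in>I. c' i > t} = {}" using c'M2 by force
      then show ?thesis by (simp only: sum.empty order_refl)
    next
      case False
      then have "{i\<in>I. c' i > t} = {i\<in>I. c i > t}" using M2M by (auto simp: c'_def)
      then show ?thesis using less.prems by simp
    qed
    ultimately have IH: "(\<Sum>i\<in>I. c' i * d i) \<ge> 0" by (rule less.hyps)
    have "M2 < M" using M2 M2M by auto
    then have "(\<Sum>i\<in>I. c i * d i) = (\<Sum>i\<in>I. c' i * d i) + (M - M2) * sum d {i\<in>I. c i > M2}"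
      unfolding c'_def using I M2_ge by (rule sum_mult_lower_top_value)
    then show ?thesis using IH M2M less.prems[of M2] by simp
  qed
qed

lemma maximising_permutation_monotone:
  fixes c \<mu> :: "'n::finite \<Rightarrow> real"
  assumes \<pi>: "\<pi> permutes UNIV"
    and max: "\<And>\<sigma>. \<sigma> permutes UNIV \<Longrightarrow> (\<Sum>i\<in>UNIV. c i * \<mu> (\<sigma> i)) \<le> (\<Sum>i\<in>UNIV. c i * \<mu> (\<pi> i))"
    and ik: "c i > c k"
  shows "\<mu> (\<pi> k) \<le> \<mu> (\<pi> i)"
proof (rule ccontr)
  assume neg: "\<not> \<mu> (\<pi> k) \<le> \<mu> (\<pi> i)"
  define \<sigma> where "\<sigma> = \<pi> \<circ> Transposition.transpose i k"
  have "\<sigma> permutes UNIV" unfolding \<sigma>_def by (intro permutes_compose \<pi> permutes_swap_id) auto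
  have "i \<noteq> k" using ik by auto
  define g where "g l = c l * \<mu> (\<sigma> l) - c l * \<mu> (\<pi> l)" for l
  have "(\<Sum>l\<in>UNIV. g l) = (\<Sum>l\<in>{i, k}. g l)"
    by (rule sum.mono_neutral_right) (auto simp: g_def \<sigma>_def)
  also have "\<dots> = (c i - c k) * (\<mu> (\<pi> k) - \<mu> (\<pi> i))"
    using \<open>i \<noteq> k\<close> by (simp add: g_def \<sigma>_def algebra_simps)
  also have "\<dots> > 0" using ik neg by simp
  finally show False
    using max[OF \<open>\<sigma> permutes UNIV\<close>] by (simp add: g_def sum_subtractf)
qed

lemma weighted_sum_le_sum_top:
  fixes r \<mu> :: "'n::finite \<Rightarrow> real"
  assumes r: "\<And>j. 0 \<le> r j \<and> r j \<le> 1" and mass: "sum r UNIV = card T"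
    and top: "\<And>j j'. j \<in> T \<Longrightarrow> j' \<notin> T \<Longrightarrow> \<mu> j' \<le> \<mu> j"
  shows "(\<Sum>j\<in>UNIV. r j * \<mu> j) \<le> sum \<mu> T"
proof -
  obtain m where m1: "\<And>j. j \<in> T \<Longrightarrow> m \<le> \<mu> j" and m2: "\<And>j. j \<notin> T \<Longrightarrow> \<mu> j \<le> m"
  proof (cases "T = {}")
    case True
    show ?thesis by (rule that[of "Max (range \<mu>)"]) (auto simp: True)
  next
    case False
    show ?thesis
    proof (rule that[of "Min (\<mu> ` T)"])
      show "\<And>j. j \<notin> T \<Longrightarrow> \<mu> j \<le> Min (\<mu> ` T)" using False top by simp
    qed simp
  qed
  define ind where "ind j = (if j \<in> T then 1 else 0 :: real)" for j
  have "(\<Sum>j\<in>UNIV. (ind j - r j) * m) \<le> (\<Sum>j\<in>UNIV. (ind j - r j) * \<mu> j)"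
  proof (rule sum_mono)
    fix j
    show "(ind j - r j) * m \<le> (ind j - r j) * \<mu> j"
      using m1[of j] m2[of j] r[of j] by (cases "j \<in> T") (auto simp: ind_def mult_left_mono)
  qed
  moreover have "(\<Sum>j\<in>UNIV. ind j) = card T" by (simp add: ind_def sum.If_cases)
  then have "(\<Sum>j\<in>UNIV. (ind j - r j) * m) = 0"
    using mass by (simp add: sum_distrib_right[symmetric] sum_subtractf)
  moreover have "sum \<mu> T = (\<Sum>j\<in>UNIV. ind j * \<mu> j)"
    by (simp add: ind_def if_distrib[of "\<lambda>x. x * _"] sum.If_cases cong: if_cong)
  ultimately show ?thesis by (simp add: left_diff_distrib sum_subtractf)
qed

lemma doubly_stochastic_superlevel_sum_le:
  fixes P :: "'n::finite \<Rightarrow> 'n \<Rightarrow> real" and c \<mu> :: "'n \<Rightarrow> real"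
  assumes P: "doubly_stochastic P" and \<pi>: "\<pi> permutes UNIV"
    and max: "\<And>\<sigma>. \<sigma> permutes UNIV \<Longrightarrow> (\<Sum>i\<in>UNIV. c i * \<mu> (\<sigma> i)) \<le> (\<Sum>i\<in>UNIV. c i * \<mu> (\<pi> i))"
  shows "(\<Sum>i\<in>{i. c i > t}. \<Sum>j\<in>UNIV. P i j * \<mu> j) \<le> (\<Sum>i\<in>{i. c i > t}. \<mu> (\<pi> i))"
proof -
  define S where "S = {i. c i > t}"
  define r where "r j = (\<Sum>i\<in>S. P i j)" for j
  have P0: "0 \<le> P i j" and row: "(\<Sum>j\<in>UNIV. P i j) = 1" and col: "(\<Sum>i\<in>UNIV. P i j) = 1" for i j
    using P by (auto simp: doubly_stochastic_def)
  have inj: "inj \<pi>" using \<pi> permutes_inj by blast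
  have r: "0 \<le> r j \<and> r j \<le> 1" for j
  proof -
    have "r j \<le> (\<Sum>i\<in>UNIV. P i j)" unfolding r_def by (rule sum_mono2) (auto simp: P0)
    then show ?thesis using col[of j] by (simp add: r_def sum_nonneg P0)
  qed
  have "sum r UNIV = (\<Sum>i\<in>S. \<Sum>j\<in>UNIV. P i j)" unfolding r_def by (rule sum.swap)
  also have "\<dots> = card (\<pi> ` S)" using inj by (simp add: row card_image inj_on_subset)
  finally have mass: "sum r UNIV = card (\<pi> ` S)" .
  have top: "\<mu> j' \<le> \<mu> j" if j: "j \<in> \<pi> ` S" and j': "j' \<notin> \<pi> ` S" for j j'
  proof -
    obtain i where i: "i \<in> S" "j = \<pi> i" using j by blast
    obtain k where k: "j' = \<pi> k" using \<pi> by (metis permutes_surj surj_f_inv_f)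
    then have "c i > c k" using i j' by (auto simp: S_def)
    then show ?thesis using maximising_permutation_monotone[OF \<pi> max] i k by blast
  qed
  have "(\<Sum>i\<in>S. \<Sum>j\<in>UNIV. P i j * \<mu> j) = (\<Sum>j\<in>UNIV. r j * \<mu> j)"
    by (subst sum.swap) (simp add: r_def sum_distrib_right)
  also have "\<dots> \<le> sum \<mu> (\<pi> ` S)" by (rule weighted_sum_le_sum_top[OF r mass top])
  also have "\<dots> = (\<Sum>i\<in>S. \<mu> (\<pi> i))" using inj by (simp add: sum.reindex inj_on_subset)
  finally show ?thesis by (simp add: S_def)
qed

text \<open>For \<open>\<pi>\<close> maximising \<open>\<sigma> \<mapsto> \<Sum>i. c i * \<mu> (\<sigma> i)\<close>, the vector \<open>\<mu> \<circ> \<pi>\<close> dominates \<open>P \<mu>\<close> on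
  every superlevel set of \<open>c\<close>, and Abel summation turns this into the inequality.\<close>
lemma doubly_stochastic_le_maximising_permutation:
  fixes P :: "'n::finite \<Rightarrow> 'n \<Rightarrow> real" and c \<mu> :: "'n \<Rightarrow> real"
  assumes P: "doubly_stochastic P" and \<pi>: "\<pi> permutes UNIV"
    and max: "\<And>\<sigma>. \<sigma> permutes UNIV \<Longrightarrow> (\<Sum>i\<in>UNIV. c i * \<mu> (\<sigma> i)) \<le> (\<Sum>i\<in>UNIV. c i * \<mu> (\<pi> i))"
  shows "(\<Sum>i\<in>UNIV. c i * (\<Sum>j\<in>UNIV. P i j * \<mu> j)) \<le> (\<Sum>i\<in>UNIV. c i * \<mu> (\<pi> i))"
proof -
  define d where "d i = \<mu> (\<pi> i) - (\<Sum>j\<in>UNIV. P i j * \<mu> j)" for i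
  have "(\<Sum>i\<in>UNIV. \<Sum>j\<in>UNIV. P i j * \<mu> j) = (\<Sum>j\<in>UNIV. (\<Sum>i\<in>UNIV. P i j) * \<mu> j)"
    by (subst sum.swap) (simp add: sum_distrib_right)
  also have "\<dots> = (\<Sum>i\<in>UNIV. \<mu> (\<pi> i))"
    using P sum.permute[OF \<pi>, of \<mu>] by (simp add: doubly_stochastic_def comp_def)
  finally have "sum d UNIV = 0" by (simp add: d_def sum_subtractf)
  moreover have "sum d {i\<in>UNIV. c i > t} \<ge> 0" for t
    using doubly_stochastic_superlevel_sum_le[OF P \<pi> max, of t] by (simp add: d_def sum_subtractf)
  ultimately have "(\<Sum>i\<in>UNIV. c i * d i) \<ge> 0"
    by (intro sum_mult_nonneg_if_superlevel_sums_nonneg) auto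
  then show ?thesis by (simp add: d_def right_diff_distrib sum_subtractf)
qed

text \<open>This follows from Birkhoff's theorem; directly, a separating functional attains its
  maximum over the hull at a permutation of \<open>\<mu>\<close>, which dominates \<open>P \<mu>\<close>.\<close>
lemma doubly_stochastic_mult_in_convex_hull:
  fixes P :: "'n::finite \<Rightarrow> 'n \<Rightarrow> real" and \<mu> :: "'n \<Rightarrow> real"
  assumes P: "doubly_stochastic P"
  shows "(\<chi> i. \<Sum>j\<in>UNIV. P i j * \<mu> j) \<in> convex hull permuted_vectors \<mu>"
proof (rule ccontr)
  define z where "z = (\<chi> i. \<Sum>j\<in>UNIV. P i j * \<mu> j)"
  assume "z \<notin> convex hull permuted_vectors \<mu>"
  moreover have "closed (convex hull permuted_vectors \<mu>)"
    by (simp add: compact_imp_closed finite_imp_compact_convex_hull finite_permuted_vectors)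
  ultimately obtain a b where ab: "a \<bullet> z < b" "\<And>x. x \<in> convex hull permuted_vectors \<mu> \<Longrightarrow> a \<bullet> x > b"
    using separating_hyperplane_closed_point[OF convex_convex_hull] by blast
  define F where "F \<sigma> = (\<Sum>i\<in>UNIV. - a $ i * \<mu> (\<sigma> i))" for \<sigma> :: "'n \<Rightarrow> 'n"
  have fin: "finite (F ` {\<sigma>. \<sigma> permutes UNIV})" by (simp add: finite_permutations)
  have "Max (F ` {\<sigma>. \<sigma> permutes UNIV}) \<in> F ` {\<sigma>. \<sigma> permutes UNIV}"
    using fin by (intro Max_in) (auto intro!: exI[of _ id] permutes_id)
  then obtain \<pi> where \<pi>: "\<pi> permutes UNIV" "F \<pi> = Max (F ` {\<sigma>. \<sigma> permutes UNIV})" by auto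
  have max: "F \<sigma> \<le> F \<pi>" if "\<sigma> permutes UNIV" for \<sigma> using fin that \<pi>(2) by simp
  have "(\<chi> i. \<mu> (\<pi> i)) \<in> convex hull permuted_vectors \<mu>"
    using \<pi>(1) by (auto simp: permuted_vectors_def intro: hull_inc)
  then have "b < a \<bullet> (\<chi> i. \<mu> (\<pi> i))" by (rule ab(2))
  then have "b < - F \<pi>" by (simp add: inner_vec_def F_def sum_negf)
  moreover have "- F \<pi> \<le> a \<bullet> z"
    using doubly_stochastic_le_maximising_permutation[OF P \<pi>(1) max[unfolded F_def]]
    by (simp add: F_def z_def inner_vec_def sum_negf)
  ultimately show False using ab(1) by simp
qed

lemma doubly_stochastic_orthogonal_matrix_squares:
  fixes Q :: "real^'n^'n"
  assumes "orthogonal_matrix Q"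
  shows "doubly_stochastic (\<lambda>i j. (Q $ i $ j)\<^sup>2)"
proof -
  have "(Q ** transpose Q) $ i $ i = 1" "(transpose Q ** Q) $ i $ i = 1" for i
    using assms by (simp_all add: orthogonal_matrix_def mat_def)
  then show ?thesis
    by (simp add: doubly_stochastic_def matrix_matrix_mult_def transpose_def power2_eq_square)
qed

lemma orthogonal_diagonalization_diagonal_in_convex_hull:
  fixes Q :: "real^'n^'n"
  assumes "orthogonal_matrix Q"
  shows "(\<chi> i. (Q ** diag_mat \<mu> ** transpose Q) $ i $ i) \<in> convex hull permuted_vectors \<mu>"
proof -
  have "(Q ** diag_mat \<mu> ** transpose Q) $ i $ i = (\<Sum>j\<in>UNIV. (Q $ i $ j)\<^sup>2 * \<mu> j)" for i
    by (simp add: matrix_matrix_mult_def[of "Q ** diag_mat \<mu>"] matrix_mult_diag_mat_nth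
        transpose_def power2_eq_square mult_ac)
  then show ?thesis
    using doubly_stochastic_mult_in_convex_hull[OF doubly_stochastic_orthogonal_matrix_squares[OF assms]]
    by simp
qed

lemma sym_pos_def_diag_mat_congruence:
  fixes C :: "real^'n^'n"
  assumes C: "sym_pos_def C" and d: "\<And>i. d i \<noteq> 0"
  shows "sym_pos_def (diag_mat d ** C ** diag_mat d)"
proof -
  have D: "transpose (diag_mat d) = diag_mat d" by (simp add: vec_eq_iff transpose_def diag_mat_def)
  have "transpose (diag_mat d ** C ** diag_mat d) = diag_mat d ** C ** diag_mat d"
    using C by (simp add: sym_pos_def_def matrix_transpose_mul D matrix_mul_assoc)
  moreover have "x \<bullet> ((diag_mat d ** C ** diag_mat d) *v x) > 0" if "x \<noteq> 0" for x
  proof -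
    have "diag_mat d *v x \<noteq> 0"
      using that d by (simp add: vec_eq_iff diag_mat_def matrix_vector_mult_def
          if_distrib[of "\<lambda>x. x * _"] cong: if_cong)
    then have "(diag_mat d *v x) \<bullet> (C *v (diag_mat d *v x)) > 0" using C by (simp add: sym_pos_def_def)
    moreover have "x \<bullet> ((diag_mat d ** C ** diag_mat d) *v x) = x \<bullet> (diag_mat d *v (C *v (diag_mat d *v x)))"
      by (simp add: matrix_vector_mul_assoc matrix_mul_assoc)
    ultimately show ?thesis by (simp add: inner_matrix_vector_symmetric[OF D])
  qed
  ultimately show ?thesis by (simp add: sym_pos_def_def)
qed

lemma sym_pos_def_diagonalization_pos:
  fixes A Q :: "real^'n^'n"
  assumes A: "sym_pos_def A" and Q: "orthogonal_matrix Q" and eq: "A = Q ** diag_mat \<mu> ** transpose Q"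
  shows "\<mu> j > 0"
proof -
  define x where "x = column j Q"
  have "A ** Q = Q ** diag_mat \<mu>"
    using Q by (simp add: eq orthogonal_matrix_def flip: matrix_mul_assoc)
  have "A *v x = A *v (Q *v axis j 1)" by (simp add: x_def matrix_vector_mult_basis)
  also have "\<dots> = (A ** Q) *v axis j 1" by (rule matrix_vector_mul_assoc)
  also have "\<dots> = \<mu> j *\<^sub>R x"
    by (simp add: \<open>A ** Q = _\<close> matrix_vector_mult_basis vec_eq_iff column_def
        matrix_mult_diag_mat_nth x_def)
  finally have "A *v x = \<mu> j *\<^sub>R x" .
  moreover have "norm x = 1" using Q by (simp add: x_def orthogonal_matrix_orthonormal_columns)
  ultimately have "x \<bullet> (A *v x) = \<mu> j" by (simp add: norm_eq_1)
  moreover have "x \<noteq> 0" using \<open>norm x = 1\<close> by auto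
  ultimately show ?thesis using A by (auto simp: sym_pos_def_def)
qed

theorem eigenvalues_of_diag_mat_mult_correlation_majorize:
  fixes lam lamh :: "'n::finite \<Rightarrow> real" and C :: "real^'n^'n"
  assumes lam: "\<And>i. lam i > 0" and C: "sym_pos_def C" and C1: "\<And>i. C $ i $ i = 1"
    and eig: "eigenvalues_of (diag_mat lam ** C) lamh"
  shows "(\<forall>i. lamh i > 0) \<and> (\<chi> i. lam i) \<in> convex hull permuted_vectors lamh"
proof -
  define d where "d i = sqrt (lam i)" for i
  have d: "d i \<noteq> 0" "d i * d i = lam i" for i using lam[of i] by (simp_all add: d_def)
  define A where "A = diag_mat d ** C ** diag_mat d"
  have A: "sym_pos_def A" unfolding A_def using C d(1) by (rule sym_pos_def_diag_mat_congruence)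
  then have "transpose A = A" by (simp add: sym_pos_def_def)
  then obtain Q \<mu> where Q: "orthogonal_matrix Q" and A_eq: "A = Q ** diag_mat \<mu> ** transpose Q"
    by (rule symmetric_matrix_orthogonal_diagonalization)
  have "eigenvalues_of A lamh"
    using eig eigenvalues_of_diag_mat_mult_symmetrized[of d C lamh] d by (simp add: A_def)
  then obtain \<sigma> where \<sigma>: "\<sigma> permutes UNIV" "\<And>i. lamh (\<sigma> i) = \<mu> i"
    using eigenvalues_of_orthogonal_diagonalization[OF Q] A_eq by blast
  have "lamh i > 0" for i
  proof -
    have "lamh i = \<mu> (inv \<sigma> i)" using \<sigma> by (metis permutes_inverses(1))
    then show ?thesis using sym_pos_def_diagonalization_pos[OF A Q A_eq] by simp
  qed
  moreover have "(\<chi> i. lam i) = (\<chi> i. A $ i $ i)"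
    using C1 d(2) by (simp add: A_def diag_mat_matrix_mult_nth matrix_mult_diag_mat_nth mult.commute)
  then have "(\<chi> i. lam i) \<in> convex hull permuted_vectors (lamh \<circ> \<sigma>)"
    using orthogonal_diagonalization_diagonal_in_convex_hull[OF Q, of \<mu>] \<sigma>(2) A_eq
    by (simp add: comp_def)
  then have "(\<chi> i. lam i) \<in> convex hull permuted_vectors lamh"
    using hull_mono[OF permuted_vectors_comp_subset[OF \<sigma>(1)]] by blast
  ultimately show ?thesis by blast
qed

section \<open>Exchangeable weighted sums\<close>

lemma distributed_lborel_distr_borel_eq:
  fixes X Y :: "'a \<Rightarrow> real"
  assumes "distributed M lborel X f" "distributed M lborel Y f"
  shows "distr M borel X = distr M borel Y"
proof -
  have "distr M borel X = distr M lborel X" by (rule distr_cong) simp_all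
  also have "\<dots> = distr M lborel Y" using assms by (simp add: distributed_def)
  also have "\<dots> = distr M borel Y" by (rule distr_cong) simp_all
  finally show ?thesis .
qed

lemma distributed_AE_pos:
  fixes X :: "'a \<Rightarrow> real"
  assumes X: "distributed M lborel X f" and f0: "\<And>x. x \<le> 0 \<Longrightarrow> f x = 0"
  shows "AE \<omega> in M. X \<omega> > 0"
proof -
  have "x > 0" if "0 < f x" for x using f0[of x] that by (cases "x \<le> 0") auto
  then have "AE x in lborel. 0 < f x \<longrightarrow> x > 0" by simp
  then have "AE x in density lborel f. x > 0" using X by (simp add: distributed_def AE_density)
  moreover have "distr M lborel X = density lborel f" using X by (simp add: distributed_def)
  ultimately have "AE x in distr M lborel X. x > 0" by (simp only:)
  then show ?thesis using X by (intro AE_distrD[of X M lborel]) (auto simp: distributed_def)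
qed

lemma convex_on_ln_one_plus_div:
  fixes s :: real
  assumes "s \<ge> 0"
  shows "convex_on {0<..} (\<lambda>y. ln (1 + s / y))"
proof (rule convex_on_realI[where f' = "\<lambda>y. 1 / (y + s) - 1 / y"])
  fix y :: real assume y: "y \<in> {0<..}"
  have "((\<lambda>y. ln (y + s) - ln y) has_real_derivative (1 / (y + s) - 1 / y)) (at y)"
    using y assms by (auto intro!: derivative_eq_intros)
  moreover have "ln (z + s) - ln z = ln (1 + s / z)" if "z \<in> {0<..}" for z
  proof -
    have "1 + s / z = (z + s) / z" using that by (simp add: field_simps)
    then show ?thesis using that assms by (simp add: ln_div)
  qed
  ultimately show "((\<lambda>y. ln (1 + s / y)) has_real_derivative (1 / (y + s) - 1 / y)) (at y)"
    by (rule has_field_derivative_transform_within_open[OF _ open_greaterThan y])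
next
  fix x y :: real assume x: "x \<in> {0<..}" and y: "y \<in> {0<..}" and "x \<le> y"
  then have "x * (x + s) \<le> y * (y + s)" using assms by (intro mult_mono) auto
  then have "s / (y * (y + s)) \<le> s / (x * (x + s))"
    using x y assms by (intro divide_left_mono) auto
  then show "1 / (x + s) - 1 / x \<le> 1 / (y + s) - 1 / y"
    using x y assms by (simp add: field_simps)
qed simp

lemma integral_convex_combination_le:
  fixes f :: "'a \<Rightarrow> real \<Rightarrow> real" and Y :: "'b \<Rightarrow> 'a \<Rightarrow> real"
  assumes H: "finite H" and u: "\<And>x. x \<in> H \<Longrightarrow> 0 \<le> u x" "sum u H = 1"
    and conv: "AE \<omega> in M. convex_on K (f \<omega>) \<and> (\<forall>x\<in>H. Y x \<omega> \<in> K)"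
    and int: "integrable M (\<lambda>\<omega>. f \<omega> (\<Sum>x\<in>H. u x * Y x \<omega>))"
      "\<And>x. x \<in> H \<Longrightarrow> integrable M (\<lambda>\<omega>. f \<omega> (Y x \<omega>))"
    and eq: "\<And>x. x \<in> H \<Longrightarrow> (\<integral>\<omega>. f \<omega> (Y x \<omega>) \<partial>M) = c"
  shows "(\<integral>\<omega>. f \<omega> (\<Sum>x\<in>H. u x * Y x \<omega>) \<partial>M) \<le> c"
proof -
  have "H \<noteq> {}" using u(2) by auto
  have "AE \<omega> in M. f \<omega> (\<Sum>x\<in>H. u x * Y x \<omega>) \<le> (\<Sum>x\<in>H. u x * f \<omega> (Y x \<omega>))"
    using conv
  proof eventually_elim
    case (elim \<omega>)
    then show ?case using convex_on_sum[OF H \<open>H \<noteq> {}\<close>, of K "f \<omega>" u "\<lambda>x. Y x \<omega>"] u by simp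
  qed
  then have "(\<integral>\<omega>. f \<omega> (\<Sum>x\<in>H. u x * Y x \<omega>) \<partial>M) \<le> (\<integral>\<omega>. (\<Sum>x\<in>H. u x * f \<omega> (Y x \<omega>)) \<partial>M)"
    using int by (intro integral_mono_AE) auto
  also have "\<dots> = (\<Sum>x\<in>H. u x * c)" using int(2) eq by (simp add: integral_sum)
  also have "\<dots> = c" using u(2) by (simp add: sum_distrib_right[symmetric])
  finally show ?thesis .
qed

context prob_space
begin

lemma indep_vars_distr_reindex:
  fixes X :: "'i \<Rightarrow> 'a \<Rightarrow> real" and \<tau> :: "'i \<Rightarrow> 'i"
  assumes indep: "indep_vars (\<lambda>_. borel) X UNIV" and \<tau>: "inj \<tau>"
    and same: "\<And>k. distr M borel (X (\<tau> k)) = distr M borel (X k)"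
  shows "distr M (\<Pi>\<^sub>M k\<in>UNIV. borel) (\<lambda>\<omega>. \<lambda>k\<in>UNIV. X (\<tau> k) \<omega>)
       = distr M (\<Pi>\<^sub>M k\<in>UNIV. borel) (\<lambda>\<omega>. \<lambda>k\<in>UNIV. X k \<omega>)"
proof -
  define E :: "('i \<Rightarrow> real) measure" where "E = (\<Pi>\<^sub>M k\<in>UNIV. borel)"
  define N where "N k = distr M borel (X k)" for k
  have rv: "X k \<in> borel_measurable M" for k using indep by (simp add: indep_vars_def)
  have joint: "distr M E (\<lambda>\<omega>. \<lambda>k\<in>UNIV. X k \<omega>) = (\<Pi>\<^sub>M k\<in>UNIV. N k)"
    using indep indep_vars_iff_distr_eq_PiM[where I=UNIV and M'="\<lambda>_. borel" and X=X] rv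
    by (simp add: E_def N_def)
  have reindex: "(\<lambda>z. \<lambda>k\<in>UNIV. z (\<tau> k)) \<in> measurable E E"
    unfolding E_def by (intro measurable_restrict measurable_component_singleton) auto
  have "distr M E (\<lambda>\<omega>. \<lambda>k\<in>UNIV. X (\<tau> k) \<omega>)
      = distr (distr M E (\<lambda>\<omega>. \<lambda>k\<in>UNIV. X k \<omega>)) E (\<lambda>z. \<lambda>k\<in>UNIV. z (\<tau> k))"
    using reindex rv by (subst distr_distr) (auto simp: E_def comp_def intro!: measurable_restrict)
  also have "\<dots> = distr (\<Pi>\<^sub>M k\<in>UNIV. N k) (\<Pi>\<^sub>M k\<in>UNIV. N (\<tau> k)) (\<lambda>z. \<lambda>k\<in>UNIV. z (\<tau> k))"
    unfolding joint by (rule distr_cong[OF refl]) (auto simp: E_def N_def intro!: sets_PiM_cong)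
  also have "\<dots> = (\<Pi>\<^sub>M k\<in>UNIV. N (\<tau> k))"
    using \<tau> rv by (intro distr_PiM_reindex) (auto simp: N_def intro: prob_space_distr)
  finally show ?thesis using joint same by (simp add: E_def N_def)
qed

lemma indep_vars_integral_reindex:
  fixes X :: "'i \<Rightarrow> 'a \<Rightarrow> real" and \<tau> :: "'i \<Rightarrow> 'i" and g :: "('i \<Rightarrow> real) \<Rightarrow> real"
  assumes indep: "indep_vars (\<lambda>_. borel) X UNIV" and \<tau>: "inj \<tau>"
    and same: "\<And>k. distr M borel (X (\<tau> k)) = distr M borel (X k)"
    and g: "g \<in> borel_measurable (\<Pi>\<^sub>M k\<in>UNIV. borel)"
  shows "integrable M (\<lambda>\<omega>. g (\<lambda>k. X (\<tau> k) \<omega>)) \<longleftrightarrow> integrable M (\<lambda>\<omega>. g (\<lambda>k. X k \<omega>))"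
    and "(\<integral>\<omega>. g (\<lambda>k. X (\<tau> k) \<omega>) \<partial>M) = (\<integral>\<omega>. g (\<lambda>k. X k \<omega>) \<partial>M)"
proof -
  have rv: "X k \<in> borel_measurable M" for k using indep by (simp add: indep_vars_def)
  have meas: "(\<lambda>\<omega>. \<lambda>k\<in>UNIV. X (\<rho> k) \<omega>) \<in> measurable M (\<Pi>\<^sub>M k\<in>UNIV. borel)" for \<rho> :: "'i \<Rightarrow> 'i"
    using rv by (intro measurable_restrict) auto
  have distr: "distr M (\<Pi>\<^sub>M k\<in>UNIV. borel) (\<lambda>\<omega>. \<lambda>k\<in>UNIV. X (\<tau> k) \<omega>)
      = distr M (\<Pi>\<^sub>M k\<in>UNIV. borel) (\<lambda>\<omega>. \<lambda>k\<in>UNIV. X k \<omega>)"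
    using indep \<tau> same by (rule indep_vars_distr_reindex)
  show "integrable M (\<lambda>\<omega>. g (\<lambda>k. X (\<tau> k) \<omega>)) \<longleftrightarrow> integrable M (\<lambda>\<omega>. g (\<lambda>k. X k \<omega>))"
    using integrable_distr_eq[OF meas[of \<tau>] g] integrable_distr_eq[OF meas[of id] g] distr
    by (simp add: restrict_UNIV)
  show "(\<integral>\<omega>. g (\<lambda>k. X (\<tau> k) \<omega>) \<partial>M) = (\<integral>\<omega>. g (\<lambda>k. X k \<omega>) \<partial>M)"
    using integral_distr[OF meas[of \<tau>] g] integral_distr[OF meas[of id] g] distr
    by (simp add: restrict_UNIV)
qed

lemma integral_permuted_weights_eq:
  fixes X :: "'n::finite option \<Rightarrow> 'a \<Rightarrow> real" and h :: "real \<Rightarrow> real \<Rightarrow> real"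
  assumes indep: "indep_vars (\<lambda>_. borel) X UNIV"
    and iid: "\<And>i j. distr M borel (X (Some i)) = distr M borel (X (Some j))"
    and h: "(\<lambda>(s, y). h s y) \<in> borel_measurable (borel \<Otimes>\<^sub>M borel)" and \<pi>: "\<pi> permutes UNIV"
    and int: "integrable M (\<lambda>\<omega>. h (X None \<omega>) (\<Sum>i\<in>UNIV. lamh i * X (Some i) \<omega>))"
  shows "integrable M (\<lambda>\<omega>. h (X None \<omega>) (\<Sum>i\<in>UNIV. lamh (\<pi> i) * X (Some i) \<omega>))"
    and "(\<integral>\<omega>. h (X None \<omega>) (\<Sum>i\<in>UNIV. lamh (\<pi> i) * X (Some i) \<omega>) \<partial>M)
       = (\<integral>\<omega>. h (X None \<omega>) (\<Sum>i\<in>UNIV. lamh i * X (Some i) \<omega>) \<partial>M)"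
proof -
  define g where "g z = h (z None) (\<Sum>j\<in>UNIV. lamh j * z (Some j))" for z :: "'n option \<Rightarrow> real"
  have g: "g \<in> borel_measurable (\<Pi>\<^sub>M k\<in>UNIV. borel)" unfolding g_def using h by measurable
  define \<tau> where "\<tau> = map_option (inv \<pi>)"
  have "(\<Sum>i\<in>UNIV. lamh (\<pi> i) * X (Some i) \<omega>) = (\<Sum>j\<in>UNIV. lamh j * X (\<tau> (Some j)) \<omega>)" for \<omega>
    using sum.permute[OF \<pi>, of "\<lambda>j. lamh j * X (\<tau> (Some j)) \<omega>"] \<pi>
    by (simp add: \<tau>_def comp_def permutes_inverses(2))
  then have eq: "h (X None \<omega>) (\<Sum>i\<in>UNIV. lamh (\<pi> i) * X (Some i) \<omega>) = g (\<lambda>k. X (\<tau> k) \<omega>)" for \<omega>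
    by (simp add: g_def \<tau>_def)
  have "inj \<tau>" unfolding \<tau>_def by (rule option.inj_map[OF permutes_inj[OF permutes_inv[OF \<pi>]]])
  moreover have "distr M borel (X (\<tau> k)) = distr M borel (X k)" for k
    using iid by (cases k) (simp_all add: \<tau>_def)
  ultimately show "integrable M (\<lambda>\<omega>. h (X None \<omega>) (\<Sum>i\<in>UNIV. lamh (\<pi> i) * X (Some i) \<omega>))"
    and "(\<integral>\<omega>. h (X None \<omega>) (\<Sum>i\<in>UNIV. lamh (\<pi> i) * X (Some i) \<omega>) \<partial>M)
       = (\<integral>\<omega>. h (X None \<omega>) (\<Sum>i\<in>UNIV. lamh i * X (Some i) \<omega>) \<partial>M)"
    using indep_vars_integral_reindex[OF indep _ _ g, of \<tau>] int by (simp_all add: eq g_def)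
qed

lemma integral_le_of_weights_in_permutation_hull:
  fixes X :: "'n::finite option \<Rightarrow> 'a \<Rightarrow> real" and h :: "real \<Rightarrow> real \<Rightarrow> real"
  assumes indep: "indep_vars (\<lambda>_. borel) X UNIV"
    and iid: "\<And>i j. distr M borel (X (Some i)) = distr M borel (X (Some j))"
    and lam: "(\<chi> i. lam i) \<in> convex hull permuted_vectors lamh"
    and h: "(\<lambda>(s, y). h s y) \<in> borel_measurable (borel \<Otimes>\<^sub>M borel)"
    and conv: "AE \<omega> in M. convex_on K (h (X None \<omega>))
                 \<and> (\<forall>\<sigma>. \<sigma> permutes UNIV \<longrightarrow> (\<Sum>i\<in>UNIV. lamh (\<sigma> i) * X (Some i) \<omega>) \<in> K)"
    and int: "integrable M (\<lambda>\<omega>. h (X None \<omega>) (\<Sum>i\<in>UNIV. lam i * X (Some i) \<omega>))"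
      "integrable M (\<lambda>\<omega>. h (X None \<omega>) (\<Sum>i\<in>UNIV. lamh i * X (Some i) \<omega>))"
  shows "(\<integral>\<omega>. h (X None \<omega>) (\<Sum>i\<in>UNIV. lam i * X (Some i) \<omega>) \<partial>M)
       \<le> (\<integral>\<omega>. h (X None \<omega>) (\<Sum>i\<in>UNIV. lamh i * X (Some i) \<omega>) \<partial>M)"
proof -
  define H where "H = permuted_vectors lamh"
  define Y where "Y x \<omega> = (\<Sum>i\<in>UNIV. x $ i * X (Some i) \<omega>)" for x \<omega>
  from lam obtain u where u: "\<And>x. x \<in> H \<Longrightarrow> 0 \<le> u x" "sum u H = 1"
      "(\<Sum>x\<in>H. u x *\<^sub>R x) = (\<chi> i. lam i)"
    unfolding H_def convex_hull_finite[OF finite_permuted_vectors] by blast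
  have lam_Y: "(\<Sum>i\<in>UNIV. lam i * X (Some i) \<omega>) = (\<Sum>x\<in>H. u x * Y x \<omega>)" for \<omega>
  proof -
    have "lam i = (\<Sum>x\<in>H. u x * x $ i)" for i
      using arg_cong[OF u(3), of "\<lambda>v. v $ i"] by simp
    then show ?thesis
      by (simp add: Y_def sum_distrib_left sum_distrib_right mult.assoc sum.swap[of _ UNIV H])
  qed
  have vertex: "integrable M (\<lambda>\<omega>. h (X None \<omega>) (Y x \<omega>))
      \<and> (\<integral>\<omega>. h (X None \<omega>) (Y x \<omega>) \<partial>M) = (\<integral>\<omega>. h (X None \<omega>) (\<Sum>i\<in>UNIV. lamh i * X (Some i) \<omega>) \<partial>M)"
    if "x \<in> H" for x
    using that integral_permuted_weights_eq[OF indep iid h _ int(2)]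
    by (auto simp: H_def permuted_vectors_def Y_def)
  have "AE \<omega> in M. convex_on K (h (X None \<omega>)) \<and> (\<forall>x\<in>H. Y x \<omega> \<in> K)"
    using conv by eventually_elim (auto simp: H_def permuted_vectors_def Y_def)
  then show ?thesis
    unfolding lam_Y using u(1,2) int(1) vertex
    by (intro integral_convex_combination_le[where f="\<lambda>\<omega>. h (X None \<omega>)"])
      (auto simp: finite_permuted_vectors H_def lam_Y)
qed

lemma convex_order_of_weights_in_permutation_hull:
  fixes X :: "'n::finite option \<Rightarrow> 'a \<Rightarrow> real"
  assumes indep: "indep_vars (\<lambda>_. borel) X UNIV"
    and iid: "\<And>i j. distr M borel (X (Some i)) = distr M borel (X (Some j))"
    and hull: "(\<chi> i. lam i) \<in> convex hull permuted_vectors lamh"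
  shows "cx_le M (\<lambda>\<omega>. \<Sum>i\<in>UNIV. lam i * X (Some i) \<omega>) (\<lambda>\<omega>. \<Sum>i\<in>UNIV. lamh i * X (Some i) \<omega>)"
  unfolding cx_le_def
proof (intro allI impI)
  fix \<phi> :: "real \<Rightarrow> real" assume conv: "convex_on UNIV \<phi>"
  then have "\<phi> \<in> borel_measurable borel"
    by (intro borel_measurable_continuous_onI convex_on_continuous) auto
  then have "(\<lambda>(s, y). \<phi> y) \<in> borel_measurable (borel \<Otimes>\<^sub>M (borel :: real measure))" by measurable
  moreover have "AE \<omega> in M. convex_on UNIV ((\<lambda>s. \<phi>) (X None \<omega>))
      \<and> (\<forall>\<sigma>. \<sigma> permutes UNIV \<longrightarrow> (\<Sum>i\<in>UNIV. lamh (\<sigma> i) * X (Some i) \<omega>) \<in> UNIV)"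
    using conv by simp
  ultimately show "integrable M (\<lambda>\<omega>. \<phi> (\<Sum>i\<in>UNIV. lam i * X (Some i) \<omega>)) \<Longrightarrow>
      integrable M (\<lambda>\<omega>. \<phi> (\<Sum>i\<in>UNIV. lamh i * X (Some i) \<omega>)) \<Longrightarrow>
      (\<integral>\<omega>. \<phi> (\<Sum>i\<in>UNIV. lam i * X (Some i) \<omega>) \<partial>M) \<le> (\<integral>\<omega>. \<phi> (\<Sum>i\<in>UNIV. lamh i * X (Some i) \<omega>) \<partial>M)"
    using integral_le_of_weights_in_permutation_hull[OF indep iid hull] by blast
qed

lemma rate_le_of_weights_in_permutation_hull:
  fixes X :: "'n::finite option \<Rightarrow> 'a \<Rightarrow> real"
  assumes indep: "indep_vars (\<lambda>_. borel) X UNIV"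
    and iid: "\<And>i j. distr M borel (X (Some i)) = distr M borel (X (Some j))"
    and hull: "(\<chi> i. lam i) \<in> convex hull permuted_vectors lamh" and lamh: "\<And>i. lamh i > 0"
    and pos: "AE \<omega> in M. X None \<omega> \<ge> 0 \<and> (\<forall>i. X (Some i) \<omega> > 0)"
    and int: "integrable M (\<lambda>\<omega>. ln (1 + X None \<omega> / (\<Sum>i\<in>UNIV. lam i * X (Some i) \<omega>)))"
      "integrable M (\<lambda>\<omega>. ln (1 + X None \<omega> / (\<Sum>i\<in>UNIV. lamh i * X (Some i) \<omega>)))"
  shows "(\<integral>\<omega>. ln (1 + X None \<omega> / (\<Sum>i\<in>UNIV. lam i * X (Some i) \<omega>)) \<partial>M)
       \<le> (\<integral>\<omega>. ln (1 + X None \<omega> / (\<Sum>i\<in>UNIV. lamh i * X (Some i) \<omega>)) \<partial>M)"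
proof -
  have "(\<lambda>(s, y). ln (1 + s / y)) \<in> borel_measurable (borel \<Otimes>\<^sub>M (borel :: real measure))"
    unfolding case_prod_beta' by measurable
  moreover have "AE \<omega> in M. convex_on {0<..} (\<lambda>y. ln (1 + X None \<omega> / y))
      \<and> (\<forall>\<sigma>. \<sigma> permutes UNIV \<longrightarrow> (\<Sum>i\<in>UNIV. lamh (\<sigma> i) * X (Some i) \<omega>) \<in> {0<..})"
    using pos by eventually_elim (auto simp: lamh convex_on_ln_one_plus_div intro!: sum_pos)
  ultimately show ?thesis using integral_le_of_weights_in_permutation_hull[OF indep iid hull] int by blast
qed

end

theorem mainTheorem5:
  fixes M :: "'a measure"
    and lam lamh :: "'n::finite \<Rightarrow> real"
    and C :: "real^'n^'n"
    and \<mu>c :: real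
    and G :: "'n \<Rightarrow> 'a \<Rightarrow> real"
    and S :: "'a \<Rightarrow> real"
  assumes "prob_space M"
    and "\<mu>c > 0"
    and "\<forall>i. lam i > 0"
    and "sym_pos_def C"
    and "\<forall>i. C $ i $ i = 1"
    and "eigenvalues_of (diag_mat lam ** C) lamh"
    and "prob_space.indep_vars M (\<lambda>_. borel) G UNIV"
    and "\<forall>i. distributed M lborel (G i) (\<lambda>x. ennreal (gamma_density \<mu>c x))"
    and "S \<in> borel_measurable M"
    and "\<forall>\<omega>\<in>space M. S \<omega> \<ge> 0"
    and "prob_space.indep_vars M (\<lambda>_. borel) (\<lambda>k. case k of None \<Rightarrow> S | Some i \<Rightarrow> G i) (UNIV :: 'n option set)"
  shows "cx_le M (\<lambda>\<omega>. \<Sum>i\<in>UNIV. lam i * G i \<omega>) (\<lambda>\<omega>. \<Sum>i\<in>UNIV. lamh i * G i \<omega>)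
       \<and> ((integrable M (\<lambda>\<omega>. ln (1 + S \<omega> / (\<Sum>i\<in>UNIV. lam i * G i \<omega>)))
            \<and> integrable M (\<lambda>\<omega>. ln (1 + S \<omega> / (\<Sum>i\<in>UNIV. lamh i * G i \<omega>))))
          \<longrightarrow> (\<integral>\<omega>. ln (1 + S \<omega> / (\<Sum>i\<in>UNIV. lamh i * G i \<omega>)) \<partial>M)
              \<ge> (\<integral>\<omega>. ln (1 + S \<omega> / (\<Sum>i\<in>UNIV. lam i * G i \<omega>)) \<partial>M))"
proof -
  interpret prob_space M by (rule assms(1))
  define X where "X = (\<lambda>k. case k of None \<Rightarrow> S | Some i \<Rightarrow> G i)"
  have indep: "indep_vars (\<lambda>_. borel) X UNIV" using assms(11) by (simp add: X_def)
  have iid: "distr M borel (X (Some i)) = distr M borel (X (Some j))" for i j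
    unfolding X_def using assms(8) by (auto intro: distributed_lborel_distr_borel_eq)
  have lamh: "\<forall>i. lamh i > 0" and hull: "(\<chi> i. lam i) \<in> convex hull permuted_vectors lamh"
    using eigenvalues_of_diag_mat_mult_correlation_majorize[of lam C lamh] assms(3-6) by auto
  have "AE \<omega> in M. \<forall>i\<in>UNIV. G i \<omega> > 0"
    using assms(8) by (intro AE_finite_allI distributed_AE_pos[where f="\<lambda>x. ennreal (gamma_density \<mu>c x)"])
      (auto simp: gamma_density_def)
  then have pos: "AE \<omega> in M. X None \<omega> \<ge> 0 \<and> (\<forall>i. X (Some i) \<omega> > 0)"
    using AE_space by eventually_elim (simp add: X_def assms(10))
  show ?thesis
    using convex_order_of_weights_in_permutation_hull[OF indep iid hull]
      rate_le_of_weights_in_permutation_hull[OF indep iid hull _ pos] lamh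
    by (simp add: X_def)
qed

end
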